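(* Let $R>0$ and let $E\subset\mathbb{R}^d$ be a body. Then $$(\partial E_R)'_R = co_R(E)\,\cup\, E'_{2R}.$$
   Context: A body is a nonempty closed subset of $\mathbb{R}^d$. Fix $R>0$; for $x\in\mathbb{R}^d$ let $B(x)=\{y:|y-x|<R\}$ be the open ball of radius $R$ centered at $x$. For a set $A\subset\mathbb{R}^d$ and $\rho>0$ put $A_\rho=\{x:\operatorname{dist}(x,A)<\rho\}$ and $A'_\rho=\mathbb{R}^d\setminus A_\rho=\{x:\operatorname{dist}(x,A)\ge\rho\}$ (with $\emptyset'_\rho=\mathbb{R}^d$). For a body $E$, the $R$-hulloid is $co_R(E)=\bigcap\{\mathbb{R}^d\setminus B : B \text{ an open ball of radius } R,\ B\cap E=\emptyset\}$, with $co_R(E)=\mathbb{R}^d$ if there is no such ball. *)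

theory Defs
  imports "HOL-Analysis.Analysis"
begin

definition body :: "'a::euclidean_space set \<Rightarrow> bool" where
  "body E \<longleftrightarrow> E \<noteq> {} \<and> closed E"

text \<open>Open rho-neighbourhood: points at distance less than rho from A
  (for nonempty A this is dist(x,A) < rho; the empty set gives the empty set).\<close>
definition nbhd :: "'a::euclidean_space set \<Rightarrow> real \<Rightarrow> 'a set" where
  "nbhd A \<rho> = {x. \<exists>a\<in>A. dist x a < \<rho>}"

text \<open>Complement of the neighbourhood: dist(x,A) >= rho, equal to UNIV for A empty.\<close>
definition conbhd :: "'a::euclidean_space set \<Rightarrow> real \<Rightarrow> 'a set" where
  "conbhd A \<rho> = UNIV - nbhd A \<rho>"

definition hulloid :: "real \<Rightarrow> 'a::euclidean_space set \<Rightarrow> 'a set" where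
  "hulloid R E = \<Inter>{UNIV - ball x R | x. ball x R \<inter> E = {}}"

end

theory Submission
  imports Defs
begin

text \<open>Write \<open>U = E\<^sub>R\<close>. Taking complements, the claim says that a point \<open>x\<close> is within
  distance \<open>R\<close> of \<open>\<partial>U\<close> exactly when \<open>x\<close> is within \<open>2R\<close> of \<open>E\<close> and lies in some open
  \<open>R\<close>-ball missing \<open>E\<close>. Points of \<open>\<partial>U\<close> are centres of such balls and lie in \<open>closure U\<close>,
  which gives one direction. Conversely, if \<open>x \<in> U\<close> lies in a ball \<open>B(z)\<close> missing \<open>E\<close>, the
  segment from \<open>x\<close> to \<open>z \<notin> U\<close> crosses \<open>\<partial>U\<close> within distance \<open>|x - z| < R\<close>; if \<open>x \<notin> U\<close> but
  \<open>|x - e| < 2R\<close> for some \<open>e \<in> E\<close>, the segment from \<open>e\<close> to \<open>x\<close> crosses \<open>\<partial>U\<close> at a point at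
  least \<open>R\<close> from \<open>e\<close>, hence less than \<open>R\<close> from \<open>x\<close>.\<close>

lemma nbhd_eq_UN_ball: "nbhd A r = (\<Union>a\<in>A. ball a r)"
  by (auto simp: nbhd_def dist_commute)

lemma open_nbhd: "open (nbhd A r)"
  by (simp add: nbhd_eq_UN_ball open_UN)

lemma mem_nbhd_iff: "x \<in> nbhd A r \<longleftrightarrow> (\<exists>a\<in>A. dist x a < r)"
  by (simp add: nbhd_def)

lemma ball_disjoint_iff_not_mem_nbhd: "ball y r \<inter> A = {} \<longleftrightarrow> y \<notin> nbhd A r"
  by (auto simp: nbhd_def)

lemma not_mem_hulloid_iff: "x \<notin> hulloid R E \<longleftrightarrow> (\<exists>z. ball z R \<inter> E = {} \<and> x \<in> ball z R)"
  unfolding hulloid_def by blast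

lemma frontier_nbhd_disjoint: "y \<in> frontier (nbhd A r) \<Longrightarrow> y \<notin> nbhd A r"
  by (simp add: frontier_def interior_open[OF open_nbhd])

lemma nbhd_closure_nbhd_subset: "nbhd (closure (nbhd A r)) s \<subseteq> nbhd A (r + s)"
proof
  fix x assume "x \<in> nbhd (closure (nbhd A r)) s"
  then obtain y where y: "y \<in> closure (nbhd A r)" "dist x y < s"
    by (auto simp: mem_nbhd_iff)
  then obtain u where u: "u \<in> nbhd A r" "dist u y < s - dist x y"
    by (metis closure_approachable diff_gt_0_iff_gt)
  then obtain a where a: "a \<in> A" "dist u a < r"
    by (auto simp: mem_nbhd_iff)
  have "dist x a \<le> dist x y + dist y u + dist u a"
    by (metis add_mono dist_triangle order_trans order_refl)
  also have "\<dots> < r + s"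
    using u a by (simp add: dist_commute)
  finally show "x \<in> nbhd A (r + s)"
    using a(1) by (auto simp: mem_nbhd_iff)
qed

lemma closed_segment_meets_frontier:
  fixes a b :: "'a::real_normed_vector"
  assumes "a \<in> S" "b \<notin> S"
  obtains y where "y \<in> closed_segment a b" "y \<in> frontier S"
proof -
  have "closed_segment a b \<inter> frontier S \<noteq> {}"
    by (rule connected_Int_frontier) (use assms in auto)
  thus thesis using that by blast
qed

lemma mem_nbhd_frontier_nbhd_inside:
  fixes E :: "'a::euclidean_space set"
  assumes "x \<in> nbhd E R" "x \<notin> hulloid R E"
  shows "x \<in> nbhd (frontier (nbhd E R)) R"
proof -
  obtain z where z: "z \<notin> nbhd E R" "dist x z < R"
    using assms(2) by (auto simp: not_mem_hulloid_iff ball_disjoint_iff_not_mem_nbhd dist_commute)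
  obtain y where y: "y \<in> closed_segment x z" "y \<in> frontier (nbhd E R)"
    using closed_segment_meets_frontier[OF assms(1) z(1)] .
  have "dist x y \<le> dist x z"
    using dist_in_closed_segment[OF y(1)] by (simp add: dist_commute)
  with z(2) y(2) show ?thesis
    unfolding mem_nbhd_iff by (intro bexI[of _ y]) auto
qed

lemma mem_nbhd_frontier_nbhd_outside:
  fixes E :: "'a::euclidean_space set"
  assumes "R > 0" "x \<in> nbhd E (2 * R)" "x \<notin> nbhd E R"
  shows "x \<in> nbhd (frontier (nbhd E R)) R"
proof -
  obtain e where e: "e \<in> E" "dist x e < 2 * R"
    using assms(2) by (auto simp: mem_nbhd_iff)
  have "e \<in> nbhd E R"
    using e(1) assms(1) unfolding mem_nbhd_iff by (intro bexI[of _ e]) auto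
  then obtain y where y: "y \<in> closed_segment e x" "y \<in> frontier (nbhd E R)"
    using closed_segment_meets_frontier assms(3) by metis
  have "dist e x = dist e y + dist y x"
    using y(1) by (simp add: between between_mem_segment[symmetric])
  moreover have "R \<le> dist y e"
    using frontier_nbhd_disjoint[OF y(2)] e(1) by (auto simp: mem_nbhd_iff not_less)
  ultimately have "dist x y < R"
    using e(2) by (simp add: dist_commute)
  with y(2) show ?thesis
    unfolding mem_nbhd_iff by blast
qed

lemma nbhd_frontier_nbhd:
  fixes E :: "'a::euclidean_space set"
  assumes "R > 0"
  shows "nbhd (frontier (nbhd E R)) R = nbhd E (2 * R) - hulloid R E"
proof
  show "nbhd (frontier (nbhd E R)) R \<subseteq> nbhd E (2 * R) - hulloid R E"
  proof
    fix x assume x: "x \<in> nbhd (frontier (nbhd E R)) R"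
    then obtain y where y: "y \<in> frontier (nbhd E R)" "dist x y < R"
      by (auto simp: mem_nbhd_iff)
    have "x \<in> nbhd (closure (nbhd E R)) R"
      using y unfolding mem_nbhd_iff frontier_def by blast
    hence "x \<in> nbhd E (2 * R)"
      using nbhd_closure_nbhd_subset[of E R R] by auto
    moreover have "x \<notin> hulloid R E"
      using frontier_nbhd_disjoint[OF y(1)] y(2)
      by (auto simp: not_mem_hulloid_iff ball_disjoint_iff_not_mem_nbhd dist_commute)
    ultimately show "x \<in> nbhd E (2 * R) - hulloid R E" by blast
  qed
  show "nbhd E (2 * R) - hulloid R E \<subseteq> nbhd (frontier (nbhd E R)) R"
    using mem_nbhd_frontier_nbhd_inside mem_nbhd_frontier_nbhd_outside[OF assms] by blast
qed

theorem mainTheorem1: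
  fixes E :: "'a::euclidean_space set" and R :: real
  assumes "R > 0" and "body E"
  shows "conbhd (frontier (nbhd E R)) R = hulloid R E \<union> conbhd E (2 * R)"
  using nbhd_frontier_nbhd[OF assms(1), of E] by (auto simp: conbhd_def)

end
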